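(* Suppose the bandwidth is insufficient, i.e. $BW_{max,EUT}\le\sum_{i\in S_{EUT}}\bar F^{-1}_{B_i}(\lambda_i;b^* )$ with $\lambda_i=w^{-1}(r_{EUT}(b^* )/h_i(b^* ))$, and all users under-weight the service guarantee, i.e. $w(\bar F_{B_i}(b^*;BW_{i,EUT}))<\bar F_{B_i}(b^*;BW_{i,EUT})$ for all $i\in S_{EUT}$. Suppose the SP keeps the strict radio-resource-management constraints (same user set $S_{EUT}$, same rate $b^*$, same total bandwidth $BW_{max,EUT}$ and same allocation $(BW_{i,EUT})$) and charges a new price $r_{PT}(b^* )$ such that every user in $S_{EUT}$ accepts under prospect theory. Then $$r_{EUT}(b^* )-r_{PT}(b^* )>L_{RRM}:=\max_{i\in S_{EUT}}\Big\{r_{EUT}(b^* )-h_i(b^* )\,w\big(\bar F_{B_i}(b^*;BW_{i,EUT})\big)\Big\}\ge 0,$$ so the SP's revenue per user decreases by more than $L_{RRM}$ relative to the EUT equilibrium.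
   Context: A service provider (SP) serves a finite set $S_{EUT}$ of end-users. For each user $i$ there is a benefit function $h_i:(0,\infty)\to(0,\infty)$ and, for each rate $b>0$, a service-guarantee function $BW\mapsto\bar F_{B_i}(b;BW)$ from $[0,\infty)$ to $[0,1)$, continuous and strictly increasing with $\bar F_{B_i}(b;0)=0$. The EUT pricing function is $r_{EUT}:(0,\infty)\to(0,\infty)$. Unit costs $c_1>0$ (rate) and $c_3>0$ (bandwidth); when a set $S$ of users all accept an offer at rate $b$ and price $r$ with bandwidths summing to $BW_{tot}$, the SP's revenue is $|S|(r-c_1b)-c_3BW_{tot}$. A probability weighting function $w:[0,1]\to[0,1]$ is a continuous strictly increasing bijection (e.g. Prelec's $w(p)=\exp(-(-\ln p)^\alpha)$, $\alpha\in(0,1]$). A user offered rate $b$ at price $r$ with bandwidth $BW_i$ accepts under EUT iff $h_i(b)\bar F_{B_i}(b;BW_i)>r$, and under prospect theory (PT) iff $h_i(b)\,w(\bar F_{B_i}(b;BW_i))>r$. Notation: for $q\ge0$, $\bar F^{-1}_{B_i}(q;b)$ is the unique $BW\ge0$ with $\bar F_{B_i}(b;BW)=q$ if $q$ lies in the range of $\bar F_{B_i}(b;\cdot)$ and $+\infty$ otherwise; $w^{-1}(x):=+\infty$ for $x>1$ and $\bar F^{-1}_{B_i}(+\infty;b):=+\infty$. EUT equilibrium data: a rate $b^*=b^*_{1,EUT}>0$ and bandwidths $BW_{i,EUT}\ge0$, $i\in S_{EUT}$, with $\sum_{i}BW_{i,EUT}=BW_{max,EUT}$, such that every $i\in S_{EUT}$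 accepts under EUT the offer of rate $b^*$ at price $r_{EUT}(b^* )$ with bandwidth $BW_{i,EUT}$. *)

theory Defs
  imports "HOL-Analysis.Analysis"
begin

text \<open>Inverse probability weighting: w^{-1}(x) for x in [0,1] (w is a bijection of [0,1]);
  w^{-1}(x) = +infinity for x > 1 (and, by convention, outside [0,1]).\<close>
definition winv :: "(real \<Rightarrow> real) \<Rightarrow> real \<Rightarrow> ereal" where
  "winv w x = (if x \<in> {0..1} then ereal (THE p. p \<in> {0..1} \<and> w p = x) else \<infinity>)"

definition Finv :: "(real \<Rightarrow> real \<Rightarrow> real) \<Rightarrow> real \<Rightarrow> ereal \<Rightarrow> ereal" where
  "Finv F b q = (if \<exists>BW. BW \<ge> 0 \<and> ereal (F b BW) = q
                  then ereal (THE BW. BW \<ge> 0 \<and> ereal (F b BW) = q) else \<infinity>)"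

text \<open>SP revenue when all users in S accept rate b at price r with total bandwidth BWtot.\<close>
definition revenue :: "real \<Rightarrow> real \<Rightarrow> 'u set \<Rightarrow> real \<Rightarrow> real \<Rightarrow> real \<Rightarrow> real" where
  "revenue c1 c3 S b r BWtot = real (card S) * (r - c1 * b) - c3 * BWtot"

end

theory Submission
  imports Defs
begin

text \<open>The loss \<open>L\<^sub>R\<^sub>R\<^sub>M\<close> is attained at some user \<open>j\<close>, and PT acceptance of
  \<open>r\<^sub>P\<^sub>T\<close> by \<open>j\<close> says exactly \<open>r\<^sub>E\<^sub>U\<^sub>T - r\<^sub>P\<^sub>T > L\<^sub>R\<^sub>R\<^sub>M\<close>; the revenue per user drops by
  \<open>r\<^sub>E\<^sub>U\<^sub>T - r\<^sub>P\<^sub>T\<close>. If \<open>L\<^sub>R\<^sub>R\<^sub>M\<close> were negative, every user would accept \<open>r\<^sub>E\<^sub>U\<^sub>T\<close> under PT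
  strictly, i.e. \<open>r\<^sub>E\<^sub>U\<^sub>T/h\<^sub>i < w(F\<^sub>i(BW\<^sub>i))\<close>; as \<open>w\<close> and \<open>F\<^sub>i\<close> are increasing, each required
  bandwidth \<open>F\<^sub>i\<^sup>-\<^sup>1(w\<^sup>-\<^sup>1(r\<^sub>E\<^sub>U\<^sub>T/h\<^sub>i))\<close> would then lie strictly below \<open>BW\<^sub>i\<close>, and summing
  contradicts the insufficiency of \<open>BW\<^sub>m\<^sub>a\<^sub>x\<close>. So \<open>L\<^sub>R\<^sub>R\<^sub>M \<ge> 0\<close> follows from insufficiency
  alone.\<close>

lemma winv_eq:
  assumes w_bij: "bij_betw w {0..1} {0..1}" and p: "p \<in> {0..1}"
  shows "winv w (w p) = ereal p"
proof -
  have "(THE x. x \<in> {0..1} \<and> w x = w p) = p"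
    using p bij_betw_imp_inj_on[OF w_bij] by (auto simp: inj_on_def)
  moreover have "w p \<in> {0..1}"
    using w_bij p bij_betwE by blast
  ultimately show ?thesis
    by (simp add: winv_def)
qed

lemma Finv_eq:
  assumes "strict_mono_on {0..} (F b)" and "x \<ge> 0"
  shows "Finv F b (ereal (F b x)) = ereal x"
proof -
  have "(THE y. y \<ge> 0 \<and> ereal (F b y) = ereal (F b x)) = x"
    using assms strict_mono_on_imp_inj_on[OF assms(1)] by (auto simp: inj_on_def)
  with assms(2) show ?thesis
    by (auto simp: Finv_def)
qed

lemma winv_less:
  assumes w_bij: "bij_betw w {0..1} {0..1}" and w_mono: "strict_mono_on {0..1} w"
    and "0 \<le> q" and q_less: "q < w y" and y: "y \<in> {0..1}"
  obtains p where "winv w q = ereal p" and "0 \<le> p" and "p < y"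
proof -
  have "q \<in> w ` {0..1}"
    using assms bij_betw_imp_surj_on[OF w_bij] bij_betwE[OF w_bij] by fastforce
  then obtain p where p: "p \<in> {0..1}" and "w p = q"
    by blast
  moreover have "p < y"
    using w_mono p y q_less \<open>w p = q\<close>
    by (metis not_less strict_mono_on_leD)
  ultimately show ?thesis
    using that winv_eq[OF w_bij p] by auto
qed

lemma Finv_less:
  assumes cont: "continuous_on {0..} (F b)" and mono: "strict_mono_on {0..} (F b)"
    and zero: "F b 0 = 0" and "0 \<le> p" and p_less: "p < F b x" and "0 \<le> x"
  shows "Finv F b (ereal p) < ereal x"
proof -
  have "continuous_on {0..x} (F b)"
    using cont continuous_on_subset by fastforce
  then obtain y where y: "0 \<le> y" "y \<le> x" "F b y = p"
    using IVT'[of "F b" 0 p x] assms by auto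
  with p_less have "y < x"
    by (metis order_less_irrefl order_le_less)
  with Finv_eq[of F b y, OF mono \<open>0 \<le> y\<close>] y show ?thesis
    by simp
qed

lemma Finv_winv_less:
  assumes w_bij: "bij_betw w {0..1} {0..1}" and w_mono: "strict_mono_on {0..1} w"
    and F_cont: "continuous_on {0..} (F b)" and F_mono: "strict_mono_on {0..} (F b)"
    and F_zero: "F b 0 = 0" and F_le_1: "F b x \<le> 1"
    and "0 \<le> q" and q_less: "q < w (F b x)" and "0 \<le> x"
  shows "Finv F b (winv w q) < ereal x"
proof -
  have "F b x \<in> {0..1}"
    using F_le_1 F_zero F_mono \<open>0 \<le> x\<close> by (auto dest: strict_mono_on_leD)
  with winv_less[OF w_bij w_mono \<open>0 \<le> q\<close> q_less] obtain p
    where "winv w q = ereal p" and "0 \<le> p" and "p < F b x" .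
  with Finv_less[of F b, OF F_cont F_mono F_zero] \<open>0 \<le> x\<close> show ?thesis
    by simp
qed

lemma sum_ereal_less:
  assumes "finite S" and "S \<noteq> {}" and "\<And>i. i \<in> S \<Longrightarrow> f i < ereal (g i)"
  shows "(\<Sum>i\<in>S. f i) < ereal (\<Sum>i\<in>S. g i)"
  using assms
proof (induction S rule: finite_ne_induct)
  case (singleton i)
  then show ?case by simp
next
  case (insert i S)
  then have "f i + (\<Sum>j\<in>S. f j) < ereal (g i) + ereal (\<Sum>j\<in>S. g j)"
    by (intro ereal_add_strict_mono2) auto
  with insert show ?case
    by simp
qed

lemma revenue_diff_per_user:
  assumes "finite S" and "S \<noteq> {}"
  shows "(revenue c1 c3 S b r BWtot - revenue c1 c3 S b r' BWtot) / real (card S) = r - r'"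
  using assms by (simp add: revenue_def field_simps card_gt_0_iff)

theorem theorem3:
  fixes S :: "'u set"
    and h :: "'u \<Rightarrow> real \<Rightarrow> real"
    and Fbar :: "'u \<Rightarrow> real \<Rightarrow> real \<Rightarrow> real"
    and rEUT :: "real \<Rightarrow> real"
    and w :: "real \<Rightarrow> real"
    and c1 c3 bstar BWmax rPT :: real
    and BW :: "'u \<Rightarrow> real"
  assumes S_fin: "finite S" and S_ne: "S \<noteq> {}"
    and h_pos: "\<And>i b. i \<in> S \<Longrightarrow> b > 0 \<Longrightarrow> h i b > 0"
    and F_cont: "\<And>i b. i \<in> S \<Longrightarrow> b > 0 \<Longrightarrow> continuous_on {0..} (Fbar i b)"
    and F_mono: "\<And>i b. i \<in> S \<Longrightarrow> b > 0 \<Longrightarrow> strict_mono_on {0..} (Fbar i b)"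
    and F_range: "\<And>i b x. i \<in> S \<Longrightarrow> b > 0 \<Longrightarrow> x \<ge> 0 \<Longrightarrow> Fbar i b x \<in> {0..<1}"
    and F_zero: "\<And>i b. i \<in> S \<Longrightarrow> b > 0 \<Longrightarrow> Fbar i b 0 = 0"
    and r_pos: "\<And>b. b > 0 \<Longrightarrow> rEUT b > 0"
    and c1_pos: "c1 > 0" and c3_pos: "c3 > 0"
    and w_cont: "continuous_on {0..1} w"
    and w_mono: "strict_mono_on {0..1} w"
    and w_bij: "bij_betw w {0..1} {0..1}"
    and b_pos: "bstar > 0"
    and BW_nonneg: "\<And>i. i \<in> S \<Longrightarrow> BW i \<ge> 0"
    and BW_sum: "(\<Sum>i\<in>S. BW i) = BWmax"
    and EUT_accept: "\<And>i. i \<in> S \<Longrightarrow> h i bstar * Fbar i bstar (BW i) > rEUT bstar"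
    and insufficient: "ereal BWmax \<le>
        (\<Sum>i\<in>S. Finv (Fbar i) bstar (winv w (rEUT bstar / h i bstar)))"
    and underweight: "\<And>i. i \<in> S \<Longrightarrow> w (Fbar i bstar (BW i)) < Fbar i bstar (BW i)"
    and PT_accept: "\<And>i. i \<in> S \<Longrightarrow> h i bstar * w (Fbar i bstar (BW i)) > rPT"
  shows "rEUT bstar - rPT > Max ((\<lambda>i. rEUT bstar - h i bstar * w (Fbar i bstar (BW i))) ` S)
       \<and> Max ((\<lambda>i. rEUT bstar - h i bstar * w (Fbar i bstar (BW i))) ` S) \<ge> 0
       \<and> (revenue c1 c3 S bstar (rEUT bstar) BWmax - revenue c1 c3 S bstar rPT BWmax) / real (card S)
           > Max ((\<lambda>i. rEUT bstar - h i bstar * w (Fbar i bstar (BW i))) ` S)"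
proof -
  define L where "L = (\<lambda>i. rEUT bstar - h i bstar * w (Fbar i bstar (BW i)))"
  obtain j where "j \<in> S" and L_max: "Max (L ` S) = L j"
    using Max_in[of "L ` S"] S_fin S_ne by (metis empty_is_image finite_imageI imageE)
  have loss_gt: "rEUT bstar - rPT > Max (L ` S)"
    using PT_accept[OF \<open>j \<in> S\<close>] L_max by (simp add: L_def)
  have loss_nonneg: "Max (L ` S) \<ge> 0"
  proof (rule ccontr)
    assume "\<not> Max (L ` S) \<ge> 0"
    then have "L i < 0" if "i \<in> S" for i
      using that S_fin by (meson Max_ge finite_imageI image_eqI less_le_trans not_le)
    then have "Finv (Fbar i) bstar (winv w (rEUT bstar / h i bstar)) < ereal (BW i)"
      if "i \<in> S" for i
      using that h_pos[OF that b_pos] r_pos[OF b_pos] F_range[OF that b_pos BW_nonneg[OF that]]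
      by (intro Finv_winv_less[OF w_bij w_mono F_cont F_mono F_zero] BW_nonneg)
        (auto simp: L_def field_simps b_pos)
    then have "(\<Sum>i\<in>S. Finv (Fbar i) bstar (winv w (rEUT bstar / h i bstar)))
        < ereal (\<Sum>i\<in>S. BW i)"
      by (rule sum_ereal_less[OF S_fin S_ne])
    with insufficient BW_sum show False
      by simp
  qed
  show ?thesis
    using loss_gt loss_nonneg revenue_diff_per_user[OF S_fin S_ne] by (simp add: L_def)
qed

end
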